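(* Let $X$ be a finite set with $|X|\ge 3$. If $\mathcal T$ is a minimum triplet cover for some tree $T\in B(X)$, then $\mu(\mathcal T)=2$.
   Context: A binary phylogenetic $X$-tree is an unrooted tree whose leaf set is $X$ and all of whose non-leaf vertices are unlabelled of degree three; $B(X)$ is the set of such trees. Pairs in $\binom{X}{2}$ are written $ab$, triples $abc$. Given $\mathcal T\subseteq\binom{X}{2}$, a triple $abc$ supports an interior vertex $v$ if $a,b,c$ lie one in each of the three components of $T$ minus $v$ and $ab,ac,bc\in\mathcal T$; $\mathcal T$ is a triplet cover for $T$ if every interior vertex is supported by some triple; it is minimum if no triplet cover for $T$ has smaller cardinality. The multiplicity $\mu_{\mathcal T}(x)$ of $x\in X$ is the number of elements of $\mathcal T$ containing $x$, and $\mu(\mathcal T)=\min\{\mu_{\mathcal T}(x):x\in X\}$. *)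

theory Defs
  imports Main
begin

text \<open>Graphs: vertex set V, edge set E of 2-element subsets of V.
  Leaves of the tree are the labels themselves, i.e. the leaf set is X \<subseteq> V.\<close>

definition adj :: "'a set set \<Rightarrow> ('a \<times> 'a) set" where
  "adj E = {(u, w). {u, w} \<in> E}"

definition is_graph :: "'a set \<Rightarrow> 'a set set \<Rightarrow> bool" where
  "is_graph V E \<longleftrightarrow> (\<forall>e\<in>E. e \<subseteq> V \<and> card e = 2)"

definition connected_graph :: "'a set \<Rightarrow> 'a set set \<Rightarrow> bool" where
  "connected_graph V E \<longleftrightarrow> (\<forall>u\<in>V. \<forall>w\<in>V. (u, w) \<in> (adj E)\<^sup>*)"

definition acyclic_graph :: "'a set set \<Rightarrow> bool" where
  "acyclic_graph E \<longleftrightarrow> (\<forall>e\<in>E. \<forall>u w. e = {u, w} \<longrightarrow> (u, w) \<notin> (adj (E - {e}))\<^sup>*)"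

definition is_tree :: "'a set \<Rightarrow> 'a set set \<Rightarrow> bool" where
  "is_tree V E \<longleftrightarrow> finite V \<and> V \<noteq> {} \<and> is_graph V E \<and> connected_graph V E \<and> acyclic_graph E"

definition degree :: "'a set set \<Rightarrow> 'a \<Rightarrow> nat" where
  "degree E v = card {e \<in> E. v \<in> e}"

definition binary_phylo_tree :: "'a set \<Rightarrow> 'a set \<Rightarrow> 'a set set \<Rightarrow> bool" where
  "binary_phylo_tree X V E \<longleftrightarrow> is_tree V E \<and> X \<subseteq> V \<and>
     (\<forall>v\<in>V. v \<in> X \<longleftrightarrow> degree E v \<le> 1) \<and>
     (\<forall>v\<in>V - X. degree E v = 3)"

definition conn_minus :: "'a set set \<Rightarrow> 'a \<Rightarrow> 'a \<Rightarrow> 'a \<Rightarrow> bool" where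
  "conn_minus E v a b \<longleftrightarrow> (a, b) \<in> (adj {e \<in> E. v \<notin> e})\<^sup>*"

definition pairs :: "'a set \<Rightarrow> 'a set set" where
  "pairs X = {p. p \<subseteq> X \<and> card p = 2}"

definition supports :: "'a set \<Rightarrow> 'a set set \<Rightarrow> 'a set set \<Rightarrow> 'a \<Rightarrow> 'a \<Rightarrow> 'a \<Rightarrow> 'a \<Rightarrow> bool" where
  "supports V E \<T> a b c v \<longleftrightarrow>
     a \<in> V - {v} \<and> b \<in> V - {v} \<and> c \<in> V - {v} \<and>
     \<not> conn_minus E v a b \<and> \<not> conn_minus E v a c \<and> \<not> conn_minus E v b c \<and>
     {a, b} \<in> \<T> \<and> {a, c} \<in> \<T> \<and> {b, c} \<in> \<T>"

definition triplet_cover :: "'a set \<Rightarrow> 'a set \<Rightarrow> 'a set set \<Rightarrow> 'a set set \<Rightarrow> bool" where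
  "triplet_cover X V E \<T> \<longleftrightarrow> \<T> \<subseteq> pairs X \<and>
     (\<forall>v\<in>V - X. \<exists>a b c. supports V E \<T> a b c v)"

definition min_triplet_cover :: "'a set \<Rightarrow> 'a set \<Rightarrow> 'a set set \<Rightarrow> 'a set set \<Rightarrow> bool" where
  "min_triplet_cover X V E \<T> \<longleftrightarrow> triplet_cover X V E \<T> \<and>
     (\<forall>\<T>'. triplet_cover X V E \<T>' \<longrightarrow> card \<T> \<le> card \<T>')"

definition multiplicity :: "'a set set \<Rightarrow> 'a \<Rightarrow> nat" where
  "multiplicity \<T> x = card {p \<in> \<T>. x \<in> p}"

definition mu :: "'a set \<Rightarrow> 'a set set \<Rightarrow> nat" where
  "mu X \<T> = Min (multiplicity \<T> ` X)"

end

theory Submission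
  imports Defs
begin

text \<open>Pruning the leaf \<open>x\<close> of a cherry \<open>{x, y}\<close> and redirecting every pair \<open>{x, a}\<close> to
  \<open>{y, a}\<close> turns a triplet cover into one of the pruned tree and loses at least two pairs:
  \<open>{x, y}\<close> itself and one of \<open>{x, z}\<close>, \<open>{y, z}\<close> from the triple supporting the parent of the
  cherry. By induction every triplet cover of a binary tree with \<open>n \<ge> 3\<close> leaves has at least
  \<open>2n - 3\<close> pairs, and adding \<open>{x, y}\<close> and \<open>{x, c}\<close> to a cover of the pruned tree attains this
  bound, so minimum covers have exactly \<open>2n - 3\<close> pairs.

  Every leaf is alone in its component at some interior vertex, and the triple supporting that
  vertex uses the leaf twice; hence all multiplicities are at least \<open>2\<close>. In a cover with
  \<open>2n - 3\<close> pairs the pruning loses exactly two pairs, and an induction shows that every pair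
  avoids some leaf of multiplicity exactly \<open>2\<close>.\<close>

lemma adj_sym: "(a, b) \<in> adj F \<Longrightarrow> (b, a) \<in> adj F"
  by (simp add: adj_def insert_commute)

lemma rtrancl_adj_sym: "(a, b) \<in> (adj F)\<^sup>* \<Longrightarrow> (b, a) \<in> (adj F)\<^sup>*"
proof (induction rule: rtrancl_induct)
  case (step y z)
  then show ?case by (meson adj_sym converse_rtrancl_into_rtrancl)
qed simp

lemma rtrancl_adj_mono: "F \<subseteq> G \<Longrightarrow> (adj F)\<^sup>* \<subseteq> (adj G)\<^sup>*"
  by (rule rtrancl_mono) (auto simp: adj_def)

lemma finite_pairs: "finite Y \<Longrightarrow> finite (pairs Y)"
  by (rule finite_subset[of _ "Pow Y"]) (auto simp: pairs_def)

lemma pairs_mono: "A \<subseteq> B \<Longrightarrow> pairs A \<subseteq> pairs B"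
  by (auto simp: pairs_def)

lemma doubleton_in_pairs_iff: "{a, b} \<in> pairs Y \<longleftrightarrow> a \<in> Y \<and> b \<in> Y \<and> a \<noteq> b"
  by (auto simp: pairs_def card_2_iff)

lemma triangle_pair:
  "{a, b} \<in> T \<Longrightarrow> {a, c} \<in> T \<Longrightarrow> {b, c} \<in> T \<Longrightarrow> p \<in> {a, b, c} \<Longrightarrow> q \<in> {a, b, c} \<Longrightarrow> p \<noteq> q
   \<Longrightarrow> {p, q} \<in> T"
  by (auto simp: insert_commute)

section \<open>Components of a binary phylogenetic tree minus a vertex\<close>

locale phylo_tree =
  fixes X V :: "'a set" and E :: "'a set set"
  assumes binary_phylo_tree: "binary_phylo_tree X V E"
begin

lemma finite_V: "finite V"
  using binary_phylo_tree by (simp add: binary_phylo_tree_def is_tree_def)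

lemma X_subset_V: "X \<subseteq> V"
  using binary_phylo_tree by (simp add: binary_phylo_tree_def)

lemma edge_subset_V: "e \<in> E \<Longrightarrow> e \<subseteq> V"
  using binary_phylo_tree by (auto simp: binary_phylo_tree_def is_tree_def is_graph_def)

lemma card_edge: "e \<in> E \<Longrightarrow> card e = 2"
  using binary_phylo_tree by (auto simp: binary_phylo_tree_def is_tree_def is_graph_def)

lemma finite_E: "finite E"
  by (rule finite_subset[of _ "Pow V"]) (use edge_subset_V finite_V in auto)

lemma connected: "u \<in> V \<Longrightarrow> w \<in> V \<Longrightarrow> (u, w) \<in> (adj E)\<^sup>*"
  using binary_phylo_tree by (simp add: binary_phylo_tree_def is_tree_def connected_graph_def)

lemma acyclic: "e \<in> E \<Longrightarrow> e = {u, w} \<Longrightarrow> (u, w) \<notin> (adj (E - {e}))\<^sup>*"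
  using binary_phylo_tree by (simp add: binary_phylo_tree_def is_tree_def acyclic_graph_def)

lemma degree_leaf: "v \<in> X \<Longrightarrow> degree E v \<le> 1"
  using binary_phylo_tree X_subset_V by (auto simp: binary_phylo_tree_def)

lemma degree_interior: "v \<in> V - X \<Longrightarrow> degree E v = 3"
  using binary_phylo_tree by (auto simp: binary_phylo_tree_def)

lemma edge_ends_neq: "{a, b} \<in> E \<Longrightarrow> a \<noteq> b"
  using card_edge by fastforce

lemma edge_ends_in_V: "{a, b} \<in> E \<Longrightarrow> a \<in> V \<and> b \<in> V"
  using edge_subset_V by auto

lemma finite_neighbours: "finite {n. {v, n} \<in> E}"
  by (rule finite_subset[OF _ finite_V]) (use edge_ends_in_V in blast)

lemma leaf_neighbour_unique:
  assumes "n \<in> X" "{n, p} \<in> E" "{n, q} \<in> E"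
  shows "p = q"
proof -
  have fin: "finite {e \<in> E. n \<in> e}" using finite_E by simp
  have "card {e \<in> E. n \<in> e} \<le> 1" using degree_leaf assms(1) by (simp add: degree_def)
  then have "{n, p} = {n, q}" using assms(2,3) card_le_Suc0_iff_eq[OF fin] by auto
  then show ?thesis using edge_ends_neq assms(2,3) by (auto simp: doubleton_eq_iff)
qed

lemma card_neighbours_interior:
  assumes "v \<in> V - X"
  shows "card {n. {v, n} \<in> E} = 3"
proof -
  have "{e \<in> E. v \<in> e} = (\<lambda>n. {v, n}) ` {n. {v, n} \<in> E}"
  proof
    show "{e \<in> E. v \<in> e} \<subseteq> (\<lambda>n. {v, n}) ` {n. {v, n} \<in> E}"
    proof
      fix e assume "e \<in> {e \<in> E. v \<in> e}"
      then have e: "e \<in> E" "v \<in> e" by auto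
      then obtain a b where "e = {a, b}" using card_edge card_2_iff by metis
      then have "e = {v, if a = v then b else a}" using e by auto
      then show "e \<in> (\<lambda>n. {v, n}) ` {n. {v, n} \<in> E}" using e by auto
    qed
  qed auto
  moreover have "inj_on (\<lambda>n. {v, n}) {n. {v, n} \<in> E}"
    by (auto simp: inj_on_def doubleton_eq_iff dest: edge_ends_neq)
  ultimately have "card {e \<in> E. v \<in> e} = card {n. {v, n} \<in> E}"
    by (simp add: card_image)
  then show ?thesis using degree_interior assms by (simp add: degree_def)
qed

lemma other_neighbours_interior:
  assumes "n \<in> V - X" "{n, v} \<in> E"
  obtains m1 m2 where "{k. {n, k} \<in> E} = {v, m1, m2}" "m1 \<noteq> m2" "m1 \<noteq> v" "m2 \<noteq> v"
proof -
  have "card ({k. {n, k} \<in> E} - {v}) = 2"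
    using card_neighbours_interior[OF assms(1)] assms(2) finite_neighbours by simp
  then obtain m1 m2 where "{k. {n, k} \<in> E} - {v} = {m1, m2}" "m1 \<noteq> m2"
    by (auto simp: card_2_iff)
  then show ?thesis using that assms(2) by blast
qed

abbreviation same_comp :: "'a \<Rightarrow> 'a \<Rightarrow> 'a \<Rightarrow> bool" where
  "same_comp v a b \<equiv> conn_minus E v a b"

lemma same_comp_refl: "same_comp v a a"
  by (simp add: conn_minus_def)

lemma same_comp_sym: "same_comp v a b \<Longrightarrow> same_comp v b a"
  by (simp add: conn_minus_def rtrancl_adj_sym)

lemma same_comp_trans: "same_comp v a b \<Longrightarrow> same_comp v b c \<Longrightarrow> same_comp v a c"
  by (simp add: conn_minus_def)

lemma same_comp_edge: "{a, b} \<in> E \<Longrightarrow> v \<noteq> a \<Longrightarrow> v \<noteq> b \<Longrightarrow> same_comp v a b"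
  by (simp add: conn_minus_def adj_def r_into_rtrancl)

lemma same_comp_removed: "same_comp v v a \<Longrightarrow> a = v"
  unfolding conn_minus_def by (erule converse_rtranclE) (auto simp: adj_def)

lemma same_comp_in_V:
  assumes "same_comp v a n" "n \<in> V"
  shows "a \<in> V"
  using assms(1) unfolding conn_minus_def
proof (cases rule: converse_rtranclE)
  case (step b)
  then show ?thesis using edge_ends_in_V by (auto simp: adj_def)
qed (use assms in simp)

text \<open>On a walk from \<open>a\<close> to \<open>v\<close>, the segment up to the first of \<open>u\<close>, \<open>v\<close> avoids the other one.\<close>

lemma same_comp_either:
  assumes "u \<in> V" "v \<in> V" "a \<in> V" "u \<noteq> v"
  shows "same_comp u a v \<or> same_comp v a u"
proof -
  have "(a, v) \<in> (adj E)\<^sup>*" using connected assms by auto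
  then show ?thesis
  proof (induction rule: converse_rtrancl_induct)
    case (step y z)
    have yz: "{y, z} \<in> E" using step.hyps(1) by (simp add: adj_def)
    have "same_comp w y z" if "same_comp w z v'" "y \<noteq> w" "w \<noteq> v'" for w v'
      using same_comp_edge[OF yz] that same_comp_removed by metis
    with step.IH show ?case
      using same_comp_refl same_comp_trans assms(4) by metis
  qed (simp add: same_comp_refl)
qed

lemma same_comp_neighbour:
  assumes "v \<in> V" "a \<in> V" "a \<noteq> v"
  obtains n where "{v, n} \<in> E" "same_comp v a n"
proof -
  have "(a, v) \<in> (adj E)\<^sup>*" using connected assms by auto
  then have "a = v \<or> (\<exists>n. {v, n} \<in> E \<and> same_comp v a n)"
  proof (induction rule: converse_rtrancl_induct)
    case (step y z)
    have yz: "{y, z} \<in> E" using step.hyps(1) by (simp add: adj_def)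
    show ?case
    proof (cases "y = v")
      case False
      from step.IH show ?thesis
      proof
        assume "z = v"
        then have "{v, y} \<in> E" using yz by (simp add: insert_commute)
        then show ?thesis using same_comp_refl by blast
      next
        assume "\<exists>n. {v, n} \<in> E \<and> same_comp v z n"
        then obtain n where n: "{v, n} \<in> E" "same_comp v z n" by blast
        have "z \<noteq> v" using n edge_ends_neq same_comp_removed by metis
        then have "same_comp v y z" using same_comp_edge[OF yz] False by auto
        then show ?thesis using n same_comp_trans by blast
      qed
    qed simp
  qed simp
  then show ?thesis using assms that by blast
qed

lemma no_path_around_edge:
  assumes "{v, n} \<in> E" "(n, v) \<in> (adj (E - {{v, n}}))\<^sup>*"
  shows False
  using acyclic[OF assms(1) refl] rtrancl_adj_sym[OF assms(2)] by simp

lemma same_comp_neighbours_eq: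
  assumes "{v, n1} \<in> E" "{v, n2} \<in> E" "same_comp v n1 n2"
  shows "n1 = n2"
proof (rule ccontr)
  assume ne: "n1 \<noteq> n2"
  have "{e \<in> E. v \<notin> e} \<subseteq> E - {{v, n1}}" by auto
  then have "(n1, n2) \<in> (adj (E - {{v, n1}}))\<^sup>*"
    using assms(3) rtrancl_adj_mono unfolding conn_minus_def by blast
  moreover have "(n2, v) \<in> adj (E - {{v, n1}})"
    using assms(2) ne edge_ends_neq[OF assms(2)]
      by (auto simp: adj_def insert_commute doubleton_eq_iff)
  ultimately show False
    using no_path_around_edge assms(1) by (meson rtrancl_into_rtrancl)
qed

lemma edge_sides_disjoint:
  assumes "{v, n} \<in> E" "same_comp v a n"
  shows "\<not> same_comp n a v"
proof
  assume "same_comp n a v"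
  moreover have "{e \<in> E. v \<notin> e} \<subseteq> E - {{v, n}}" "{e \<in> E. n \<notin> e} \<subseteq> E - {{v, n}}" by auto
  ultimately have "(n, a) \<in> (adj (E - {{v, n}}))\<^sup>*" "(a, v) \<in> (adj (E - {{v, n}}))\<^sup>*"
    using same_comp_sym[OF assms(2)] rtrancl_adj_mono unfolding conn_minus_def by blast+
  then show False using no_path_around_edge assms(1) by (meson rtrancl_trans)
qed

lemma leaf_comp_singleton:
  assumes "{v, n} \<in> E" "n \<in> X" "same_comp v a n"
  shows "a = n"
  using assms(3) unfolding conn_minus_def
proof (cases rule: rtranclE)
  case (step b)
  then have "{n, b} \<in> E" by (auto simp: adj_def insert_commute)
  moreover have "{n, v} \<in> E" using assms(1) by (simp add: insert_commute)
  ultimately show ?thesis using leaf_neighbour_unique[OF assms(2)] step by (auto simp: adj_def)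
qed simp

definition separated :: "'a \<Rightarrow> 'a \<Rightarrow> 'a \<Rightarrow> 'a \<Rightarrow> bool" where
  "separated v a b c \<longleftrightarrow> \<not> same_comp v a b \<and> \<not> same_comp v a c \<and> \<not> same_comp v b c"

lemma separated_distinct: "separated v a b c \<Longrightarrow> a \<noteq> b \<and> a \<noteq> c \<and> b \<noteq> c"
  by (auto simp: separated_def same_comp_refl)

lemma separated_pair:
  "separated v a b c \<Longrightarrow> p \<in> {a, b, c} \<Longrightarrow> q \<in> {a, b, c} \<Longrightarrow> p \<noteq> q \<Longrightarrow> \<not> same_comp v p q"
  by (auto simp: separated_def dest: same_comp_sym)

lemma separated_vertex_unique:
  assumes "v \<in> V" "v' \<in> V" "a \<in> V" "b \<in> V" "c \<in> V" "separated v a b c" "separated v' a b c"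
  shows "v = v'"
proof (rule ccontr)
  assume n: "v \<noteq> v'"
  show False
    using same_comp_either[OF assms(1,2,3) n] same_comp_either[OF assms(1,2,4) n]
      same_comp_either[OF assms(1,2,5) n] assms(6,7)
    unfolding separated_def by (meson same_comp_sym same_comp_trans)
qed

lemma no_four_separated:
  assumes v: "v \<in> V - X" and "a \<in> X" "b \<in> X" "c \<in> X" "d \<in> X"
    and "separated v a b c" "\<not> same_comp v a d" "\<not> same_comp v b d" "\<not> same_comp v c d"
  shows False
proof -
  have "v \<in> V" "a \<in> V" "b \<in> V" "c \<in> V" "d \<in> V" "a \<noteq> v" "b \<noteq> v" "c \<noteq> v" "d \<noteq> v"
    using assms(1-5) X_subset_V by auto
  then obtain na nb nc nd where n:
    "{v, na} \<in> E" "same_comp v a na" "{v, nb} \<in> E" "same_comp v b nb"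
    "{v, nc} \<in> E" "same_comp v c nc" "{v, nd} \<in> E" "same_comp v d nd"
    by (metis same_comp_neighbour)
  have "na \<noteq> nb" "na \<noteq> nc" "na \<noteq> nd" "nb \<noteq> nc" "nb \<noteq> nd" "nc \<noteq> nd"
    using n assms(6-9) unfolding separated_def by (metis same_comp_sym same_comp_trans)+
  then have "card {na, nb, nc, nd} = 4" by simp
  moreover have "{na, nb, nc, nd} \<subseteq> {n. {v, n} \<in> E}" using n by simp
  ultimately have "4 \<le> card {n. {v, n} \<in> E}" using card_mono[OF finite_neighbours] by metis
  then show False using card_neighbours_interior[OF v] by simp
qed

section \<open>Covers of subtrees and cherries\<close>

text \<open>\<open>cover Y T\<close> is a triplet cover of the subtree spanned by \<open>Y\<close>: only the interior vertices
  that separate three elements of \<open>Y\<close> need support.\<close>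

definition sep_vertices :: "'a set \<Rightarrow> 'a set" where
  "sep_vertices Y = {v \<in> V - X. \<exists>a\<in>Y. \<exists>b\<in>Y. \<exists>c\<in>Y. separated v a b c}"

definition cover :: "'a set \<Rightarrow> 'a set set \<Rightarrow> bool" where
  "cover Y T \<longleftrightarrow> T \<subseteq> pairs Y \<and>
     (\<forall>v\<in>sep_vertices Y. \<exists>a b c. {a, b} \<in> T \<and> {a, c} \<in> T \<and> {b, c} \<in> T \<and> separated v a b c)"

definition cherry :: "'a set \<Rightarrow> 'a \<Rightarrow> 'a \<Rightarrow> 'a \<Rightarrow> bool" where
  "cherry Y x y u \<longleftrightarrow> u \<in> V - X \<and> x \<in> Y \<and> y \<in> Y \<and> x \<noteq> y \<and>
     (\<forall>a\<in>Y. a \<noteq> x \<longrightarrow> \<not> same_comp u x a) \<and> (\<forall>a\<in>Y. a \<noteq> y \<longrightarrow> \<not> same_comp u y a) \<and>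
     (\<forall>a\<in>Y. \<forall>b\<in>Y. a \<notin> {x, y} \<longrightarrow> b \<notin> {x, y} \<longrightarrow> same_comp u a b)"

definition branch :: "'a \<Rightarrow> 'a \<Rightarrow> 'a set" where
  "branch v n = {a. same_comp v a n}"

lemma sep_vertices_mono: "Y \<subseteq> Z \<Longrightarrow> sep_vertices Y \<subseteq> sep_vertices Z"
  by (auto simp: sep_vertices_def)

lemma finite_branch: "n \<in> V \<Longrightarrow> finite (branch v n)"
  by (rule finite_subset[OF _ finite_V]) (auto simp: branch_def intro: same_comp_in_V)

lemma leaf_branch:
  assumes "y \<in> X" "{y, p} \<in> E"
  shows "V - {y} \<subseteq> branch y p"
proof
  fix a assume a: "a \<in> V - {y}"
  then obtain n where "{y, n} \<in> E" "same_comp y a n"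
    using same_comp_neighbour assms X_subset_V by blast
  then show "a \<in> branch y p"
    using leaf_neighbour_unique[OF assms(1) _ assms(2)] by (auto simp: branch_def)
qed

lemma branch_child_psubset:
  assumes "{v, n} \<in> E" "{n, m} \<in> E" "m \<noteq> v"
  shows "branch n m \<subset> branch v n"
proof -
  have nV: "n \<in> V" and vV: "v \<in> V" and vn: "v \<noteq> n"
    using assms(1) edge_ends_in_V edge_ends_neq by blast+
  have "branch n m \<subseteq> branch v n"
  proof
    fix b assume "b \<in> branch n m"
    then have b: "same_comp n b m" by (simp add: branch_def)
    have "b \<in> V" using same_comp_in_V[OF b] edge_ends_in_V assms(2) by blast
    moreover have "\<not> same_comp n b v"
    proof
      assume "same_comp n b v"
      then have "same_comp n m v" using b same_comp_sym same_comp_trans by blast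
      then show False
        using same_comp_neighbours_eq[OF assms(2)] assms(1,3) by (metis insert_commute)
    qed
    ultimately show "b \<in> branch v n" using same_comp_either[OF nV vV] vn by (auto simp: branch_def)
  qed
  moreover have "n \<notin> branch n m" using same_comp_removed edge_ends_neq assms(2)
    by (fastforce simp: branch_def)
  moreover have "n \<in> branch v n" by (simp add: branch_def same_comp_refl)
  ultimately show ?thesis by blast
qed

lemma interior_branches:
  assumes YX: "Y \<subseteq> X" and e: "{v, n} \<in> E" and nX: "n \<notin> X"
  obtains m1 m2 where "{n, m1} \<in> E" "{n, m2} \<in> E" "m1 \<noteq> m2" "m1 \<noteq> v" "m2 \<noteq> v"
    "\<And>a. a \<in> Y \<Longrightarrow> same_comp n a v \<or> same_comp n a m1 \<or> same_comp n a m2"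
proof -
  have nV: "n \<in> V" using e edge_ends_in_V by blast
  have ne: "{n, v} \<in> E" using e by (simp add: insert_commute)
  obtain m1 m2 where m: "{k. {n, k} \<in> E} = {v, m1, m2}" "m1 \<noteq> m2" "m1 \<noteq> v" "m2 \<noteq> v"
    using other_neighbours_interior[OF _ ne] nV nX by blast
  have "same_comp n a v \<or> same_comp n a m1 \<or> same_comp n a m2" if "a \<in> Y" for a
  proof -
    have "a \<in> V" "a \<noteq> n" using that YX X_subset_V nX by auto
    then obtain k where "{n, k} \<in> E" "same_comp n a k" using same_comp_neighbour nV by metis
    moreover from this(1) have "k \<in> {v, m1, m2}" using m(1) by blast
    ultimately show ?thesis by blast
  qed
  moreover have "{n, m1} \<in> E" "{n, m2} \<in> E" using m(1) by blast+
  ultimately show ?thesis using that m(2-4) by blast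
qed

lemma singleton_branch_alone:
  assumes "branch n m \<inter> Y = {x}" "a \<in> Y" "a \<noteq> x"
  shows "\<not> same_comp n x a"
proof
  assume "same_comp n x a"
  moreover have "same_comp n x m" using assms(1) by (auto simp: branch_def)
  ultimately have "a \<in> branch n m" unfolding branch_def
    by (metis mem_Collect_eq same_comp_sym same_comp_trans)
  then show False using assms by blast
qed

lemma cherry_at_branch:
  assumes YX: "Y \<subseteq> X" and fY: "finite Y" and e: "{v, n} \<in> E"
    and two: "2 \<le> card (branch v n \<inter> Y)"
    and small: "\<And>m. {n, m} \<in> E \<Longrightarrow> m \<noteq> v \<Longrightarrow> card (branch n m \<inter> Y) \<le> 1"
  shows "\<exists>x y. cherry Y x y n"
proof -
  have nV: "n \<in> V" using e edge_ends_in_V by blast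
  have nX: "n \<notin> X"
  proof
    assume "n \<in> X"
    then have "branch v n \<inter> Y \<subseteq> {n}" using leaf_comp_singleton[OF e] by (auto simp: branch_def)
    then show False using two card_mono[of "{n}" "branch v n \<inter> Y"] by simp
  qed
  obtain m1 m2 where m1E: "{n, m1} \<in> E" and m2E: "{n, m2} \<in> E" and m: "m1 \<noteq> m2" "m1 \<noteq> v" "m2 \<noteq> v"
    and comp: "\<And>a. a \<in> Y \<Longrightarrow> same_comp n a v \<or> same_comp n a m1 \<or> same_comp n a m2"
    using interior_branches[OF YX e nX] by blast
  have "branch v n \<inter> Y \<subseteq> (branch n m1 \<inter> Y) \<union> (branch n m2 \<inter> Y)"
    using comp edge_sides_disjoint[OF e] by (auto simp: branch_def)
  then have "card (branch v n \<inter> Y) \<le> card ((branch n m1 \<inter> Y) \<union> (branch n m2 \<inter> Y))"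
    using fY by (intro card_mono) auto
  also have "\<dots> \<le> card (branch n m1 \<inter> Y) + card (branch n m2 \<inter> Y)" by (rule card_Un_le)
  finally have "card (branch n m1 \<inter> Y) = 1" "card (branch n m2 \<inter> Y) = 1"
    using two small[OF m1E m(2)] small[OF m2E m(3)] by auto
  then obtain x y where x: "branch n m1 \<inter> Y = {x}" and y: "branch n m2 \<inter> Y = {y}"
    by (meson card_1_singletonE)
  have xc: "x \<in> Y" "same_comp n x m1" and yc: "y \<in> Y" "same_comp n y m2"
    using x y by (auto simp: branch_def)
  have "x \<noteq> y"
  proof
    assume "x = y"
    then have "same_comp n m1 m2" using xc(2) yc(2) same_comp_sym same_comp_trans by blast
    then show False using same_comp_neighbours_eq[OF m1E m2E] m(1) by blast
  qed
  moreover have others: "same_comp n a v" if "a \<in> Y" "a \<notin> {x, y}" for a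
  proof -
    have "a \<notin> branch n m1" "a \<notin> branch n m2" using that x y by auto
    then show ?thesis using comp[OF that(1)] by (simp add: branch_def)
  qed
  ultimately have "cherry Y x y n"
    unfolding cherry_def
  proof (intro conjI ballI impI)
    fix a b assume "a \<in> Y" "b \<in> Y" "a \<notin> {x, y}" "b \<notin> {x, y}"
    then show "same_comp n a b" using others same_comp_sym same_comp_trans by metis
  qed (use nV nX xc(1) yc(1) singleton_branch_alone[OF x] singleton_branch_alone[OF y] in auto)
  then show ?thesis by blast
qed

lemma exists_cherry:
  assumes fY: "finite Y" and YX: "Y \<subseteq> X" and c3: "3 \<le> card Y"
  shows "\<exists>x y u. cherry Y x y u"
proof -
  define P where "P = (\<lambda>(v, n). {v, n} \<in> E \<and> 2 \<le> card (branch v n \<inter> Y) \<and> \<not> Y \<subseteq> branch v n)"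
  obtain y0 where y0: "y0 \<in> Y" using c3 by fastforce
  have c2: "2 \<le> card (Y - {y0})" using c3 y0 fY by simp
  then have "Y - {y0} \<noteq> {}" by (metis card.empty not_numeral_le_zero)
  then obtain y1 where y1: "y1 \<in> Y" "y1 \<noteq> y0" by blast
  have "(y0, y1) \<in> (adj E)\<^sup>*" using connected y0 y1 YX X_subset_V by auto
  then obtain p where p: "{y0, p} \<in> E"
    by (cases rule: converse_rtranclE) (use y1 in \<open>auto simp: adj_def\<close>)
  have "Y - {y0} \<subseteq> branch y0 p \<inter> Y" using leaf_branch[OF _ p] y0 YX X_subset_V by auto
  then have "card (Y - {y0}) \<le> card (branch y0 p \<inter> Y)" using fY by (intro card_mono) auto
  then have "2 \<le> card (branch y0 p \<inter> Y)" using c2 by simp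
  moreover have "y0 \<notin> branch y0 p" using same_comp_removed edge_ends_neq p
    by (fastforce simp: branch_def)
  ultimately have "P (y0, p)" using p y0 by (auto simp: P_def)
  then obtain v n where P: "P (v, n)"
    and least: "\<And>v' n'. P (v', n') \<Longrightarrow> card (branch v n) \<le> card (branch v' n')"
    using ex_has_least_nat[of P "(y0, p)" "\<lambda>(v, n). card (branch v n)"] by fastforce
  have e: "{v, n} \<in> E" and not_all: "\<not> Y \<subseteq> branch v n" using P by (auto simp: P_def)
  have "card (branch n m \<inter> Y) \<le> 1" if m: "{n, m} \<in> E" "m \<noteq> v" for m
  proof (rule ccontr)
    assume "\<not> card (branch n m \<inter> Y) \<le> 1"
    moreover have ps: "branch n m \<subset> branch v n" using branch_child_psubset[OF e m] .
    ultimately have "P (n, m)" using m not_all by (auto simp: P_def)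
    moreover have "card (branch n m) < card (branch v n)"
      using psubset_card_mono[OF finite_branch ps] e edge_ends_in_V by blast
    ultimately show False using least by fastforce
  qed
  then show ?thesis using cherry_at_branch[OF YX fY e] P by (auto simp: P_def)
qed

lemma cherry_sep_vertex:
  assumes ch: "cherry Y x y u" and fY: "finite Y" and c3: "3 \<le> card Y"
  shows "u \<in> sep_vertices Y"
proof -
  have "card (Y - {x, y}) \<ge> 1" using ch c3 fY by (auto simp: cherry_def card_Diff_subset)
  then have "Y - {x, y} \<noteq> {}" by (metis card.empty not_one_le_zero)
  then obtain z where z: "z \<in> Y" "z \<notin> {x, y}" by blast
  have "separated u x y z" using ch z by (auto simp: cherry_def separated_def)
  then show ?thesis using ch z by (auto simp: sep_vertices_def cherry_def)
qed

lemma sep_vertex_no_dominant_comp: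
  assumes v: "v \<in> sep_vertices Y" and w: "\<And>a. a \<in> Y \<Longrightarrow> a \<noteq> w \<Longrightarrow> same_comp v a u"
  shows False
proof -
  obtain a b c where abc: "a \<in> Y" "b \<in> Y" "c \<in> Y" "separated v a b c"
    using v by (auto simp: sep_vertices_def)
  then have "a \<noteq> b" "a \<noteq> c" "b \<noteq> c" using separated_distinct by auto
  then consider "a \<noteq> w" "b \<noteq> w" | "a \<noteq> w" "c \<noteq> w" | "b \<noteq> w" "c \<noteq> w" by blast
  then show False
    using w abc unfolding separated_def by cases (metis same_comp_sym same_comp_trans)+
qed

lemma cherry_same_comp_elsewhere:
  assumes ch: "cherry Y x y u" and YX: "Y \<subseteq> X" and v: "v \<in> sep_vertices Y" and vu: "v \<noteq> u"
  shows "same_comp v x y"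
proof -
  have uV: "u \<in> V" and vV: "v \<in> V" using ch v by (auto simp: cherry_def sep_vertices_def)
  have YV: "Y \<subseteq> V" using YX X_subset_V by auto
  have toward_u: "same_comp v w u" if w: "w \<in> Y" "\<forall>a\<in>Y. a \<noteq> w \<longrightarrow> \<not> same_comp u w a" for w
  proof (rule ccontr)
    assume n: "\<not> same_comp v w u"
    have wu: "same_comp u w v" using same_comp_either[OF uV vV] w YV vu n by blast
    have "same_comp v a u" if a: "a \<in> Y" "a \<noteq> w" for a
    proof -
      have "\<not> same_comp u a v" using wu w(2) a same_comp_sym same_comp_trans by blast
      then show ?thesis using same_comp_either[OF uV vV] a YV vu by blast
    qed
    then show False using sep_vertex_no_dominant_comp[OF v] by blast
  qed
  have "same_comp v x u" "same_comp v y u" using toward_u ch by (auto simp: cherry_def)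
  then show ?thesis using same_comp_sym same_comp_trans by blast
qed

lemma sep_vertices_delete_cherry:
  assumes ch: "cherry Y x y u" and YX: "Y \<subseteq> X"
  shows "sep_vertices (Y - {x}) = sep_vertices Y - {u}"
proof
  show "sep_vertices (Y - {x}) \<subseteq> sep_vertices Y - {u}"
  proof
    fix v assume v: "v \<in> sep_vertices (Y - {x})"
    have "u \<notin> sep_vertices (Y - {x})"
    proof
      assume "u \<in> sep_vertices (Y - {x})"
      then obtain a b c where abc: "a \<in> Y - {x}" "b \<in> Y - {x}" "c \<in> Y - {x}" "separated u a b c"
        by (auto simp: sep_vertices_def)
      have "same_comp u p q" if "p \<in> Y - {x}" "q \<in> Y - {x}" "p \<noteq> y" "q \<noteq> y" for p q
        using ch that by (auto simp: cherry_def)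
      then show False using abc separated_distinct[OF abc(4)] by (metis separated_def)
    qed
    then show "v \<in> sep_vertices Y - {u}" using v sep_vertices_mono[of "Y - {x}" Y] by blast
  qed
next
  show "sep_vertices Y - {u} \<subseteq> sep_vertices (Y - {x})"
  proof
    fix v assume v: "v \<in> sep_vertices Y - {u}"
    then have cxy: "same_comp v x y" using cherry_same_comp_elsewhere[OF ch YX] by blast
    define f where "f q = (if q = x then y else q)" for q
    have fc: "same_comp v q (f q)" for q using cxy same_comp_refl by (simp add: f_def)
    have fY: "f q \<in> Y - {x}" if "q \<in> Y" for q using ch that by (auto simp: f_def cherry_def)
    obtain a b c where abc: "a \<in> Y" "b \<in> Y" "c \<in> Y" "separated v a b c"
      using v by (auto simp: sep_vertices_def)
    have "separated v (f a) (f b) (f c)"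
      using abc(4) fc unfolding separated_def by (meson same_comp_sym same_comp_trans)
    then show "v \<in> sep_vertices (Y - {x})" using fY abc v by (auto simp: sep_vertices_def)
  qed
qed

text \<open>Every \<open>w \<in> Y\<close> forms a component of its own at some vertex separating three elements of \<open>Y\<close>:
  at the parent of a cherry if \<open>w\<close> belongs to it, and otherwise after pruning the cherry.\<close>

lemma leaf_isolated_somewhere:
  assumes "finite Y" "Y \<subseteq> X" "3 \<le> card Y" "w \<in> Y"
  shows "\<exists>v\<in>sep_vertices Y. \<forall>a\<in>Y. a \<noteq> w \<longrightarrow> \<not> same_comp v w a"
  using assms
proof (induction "card Y" arbitrary: Y rule: less_induct)
  case less
  obtain x y u where ch: "cherry Y x y u" using exists_cherry less.prems by blast
  have uM: "u \<in> sep_vertices Y" using cherry_sep_vertex[OF ch] less.prems by blast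
  have xY: "x \<in> Y" and yY: "y \<in> Y" and xy: "x \<noteq> y" using ch by (auto simp: cherry_def)
  show ?case
  proof (cases "w = x \<or> w = y")
    case True
    then show ?thesis using ch uM by (auto simp: cherry_def)
  next
    case wxy: False
    show ?thesis
    proof (cases "Y - {x, y, w} = {}")
      case True
      have "\<not> same_comp u w a" if "a \<in> Y" "a \<noteq> w" for a
      proof -
        have "a = x \<or> a = y" using True that by auto
        then have "\<not> same_comp u a w" using ch wxy less.prems(4) by (auto simp: cherry_def)
        then show ?thesis using same_comp_sym by blast
      qed
      then show ?thesis using uM by blast
    next
      case False
      then obtain q where q: "q \<in> Y" "q \<notin> {x, y, w}" by blast
      have "card {x, y, w, q} \<le> card Y"
        using xY yY q less.prems(1,4) by (intro card_mono) auto
      moreover have "card {x, y, w, q} = 4" using wxy q xy by auto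
      ultimately have c4: "4 \<le> card Y" by simp
      have "card (Y - {x}) < card Y" "3 \<le> card (Y - {x})" using xY c4 less.prems(1) by simp_all
      then obtain v where v: "v \<in> sep_vertices (Y - {x})" "\<forall>a\<in>Y - {x}. a \<noteq> w \<longrightarrow> \<not> same_comp v w a"
        using less.hyps[of "Y - {x}"] less.prems wxy by blast
      have vM: "v \<in> sep_vertices Y" "v \<noteq> u"
        using v(1) sep_vertices_delete_cherry[OF ch less.prems(2)] by auto
      have "\<not> same_comp v w x"
      proof
        assume "same_comp v w x"
        then have "same_comp v w y"
          using cherry_same_comp_elsewhere[OF ch less.prems(2) vM] same_comp_trans by blast
        then show False using v(2) yY xy wxy by auto
      qed
      then show ?thesis using vM v(2) by blast
    qed
  qed
qed

section \<open>Pruning a cherry\<close>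

lemma cover_finite: "cover Y T \<Longrightarrow> finite Y \<Longrightarrow> finite T"
  using finite_pairs finite_subset by (auto simp: cover_def)

lemma cover_pair_mem: "cover Y T \<Longrightarrow> {a, b} \<in> T \<Longrightarrow> a \<in> Y \<and> b \<in> Y \<and> a \<noteq> b"
  using doubleton_in_pairs_iff[of a b Y] by (auto simp: cover_def)

lemma cover_pairE:
  assumes "cover Y T" "p \<in> T"
  obtains a b where "p = {a, b}" "a \<noteq> b"
  using assms by (auto simp: cover_def pairs_def card_2_iff)

lemma triangle_rotate:
  assumes "{p, q} \<in> T" "{p, r} \<in> T" "{q, r} \<in> T" "separated v p q r"
    and "w \<in> {p, q, r}" "a \<in> {p, q, r}" "b \<in> {p, q, r}" "w \<noteq> a" "w \<noteq> b" "a \<noteq> b"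
  shows "{w, a} \<in> T \<and> {w, b} \<in> T \<and> {a, b} \<in> T \<and> separated v w a b"
  using triangle_pair[OF assms(1-3)] separated_pair[OF assms(4)] assms(5-10)
  unfolding separated_def by metis

lemma cherry_triangle:
  assumes ch: "cherry Y x y u" and cv: "cover Y T" and fY: "finite Y" and c3: "3 \<le> card Y"
  obtains z where "z \<in> Y" "z \<notin> {x, y}" "{x, y} \<in> T" "{x, z} \<in> T" "{y, z} \<in> T"
proof -
  obtain a b c where abc: "{a, b} \<in> T" "{a, c} \<in> T" "{b, c} \<in> T" "separated u a b c"
    using cherry_sep_vertex[OF ch fY c3] cv by (auto simp: cover_def)
  have inY: "a \<in> Y" "b \<in> Y" "c \<in> Y" using abc cover_pair_mem[OF cv] by auto
  have d: "a \<noteq> b" "a \<noteq> c" "b \<noteq> c" using separated_distinct[OF abc(4)] by auto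
  have xy: "x \<noteq> y" using ch by (auto simp: cherry_def)
  have one_outside: "p = q" if "p \<in> {a, b, c}" "q \<in> {a, b, c}" "p \<notin> {x, y}" "q \<notin> {x, y}" for p q
    using ch that inY separated_pair[OF abc(4), of p q] by (auto simp: cherry_def)
  then have "x \<in> {a, b, c}" "y \<in> {a, b, c}" using d by blast+
  moreover obtain z where z: "z \<in> {a, b, c}" "z \<notin> {x, y}" using d by blast
  ultimately have "{x, y} \<in> T" "{x, z} \<in> T" "{y, z} \<in> T"
    using triangle_pair[OF abc(1-3)] xy by auto
  then show ?thesis using that z inY by blast
qed

definition redirect :: "'a set set \<Rightarrow> 'a \<Rightarrow> 'a \<Rightarrow> 'a set set" where
  "redirect T x y = {p \<in> T. x \<notin> p} \<union> (\<lambda>a. {y, a}) ` {a. {x, a} \<in> T \<and> a \<noteq> y}"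

definition lost :: "'a set set \<Rightarrow> 'a \<Rightarrow> 'a \<Rightarrow> 'a set" where
  "lost T x y = {a. {x, a} \<in> T \<and> a \<noteq> y \<and> {y, a} \<in> T}"

lemma card_redirect:
  assumes cv: "cover Y T" and fY: "finite Y" and xyT: "{x, y} \<in> T"
  shows "card T = card (redirect T x y) + 1 + card (lost T x y)"
proof -
  define A where "A = {a. {x, a} \<in> T \<and> a \<noteq> y}"
  define T0 where "T0 = {p \<in> T. x \<notin> p}"
  define B where "B = (\<lambda>a. {y, a}) ` A"
  have fT: "finite T" using cover_finite[OF cv fY] .
  have xy: "x \<noteq> y" using cover_pair_mem[OF cv xyT] by simp
  have fA: "finite A" using cover_pair_mem[OF cv] fY by (auto simp: A_def intro: finite_subset)
  have Ax: "a \<noteq> x \<and> a \<noteq> y" if "a \<in> A" for a using cover_pair_mem[OF cv] that by (auto simp: A_def)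
  have T1: "{p \<in> T. x \<in> p} = insert {x, y} ((\<lambda>a. {x, a}) ` A)"
  proof
    show "{p \<in> T. x \<in> p} \<subseteq> insert {x, y} ((\<lambda>a. {x, a}) ` A)"
    proof
      fix p assume p: "p \<in> {p \<in> T. x \<in> p}"
      then obtain a b where "p = {a, b}" using cover_pairE[OF cv] by blast
      then have "p = {x, if a = x then b else a}" using p by auto
      then show "p \<in> insert {x, y} ((\<lambda>a. {x, a}) ` A)" using p by (auto simp: A_def)
    qed
  qed (use xyT in \<open>auto simp: A_def\<close>)
  have inj1: "inj_on (\<lambda>a. {x, a}) A" using Ax by (auto simp: inj_on_def doubleton_eq_iff)
  have "{x, y} \<notin> (\<lambda>a. {x, a}) ` A" using Ax by (auto simp: doubleton_eq_iff)
  then have "card {p \<in> T. x \<in> p} = 1 + card A"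
    using T1 card_image[OF inj1] fA by simp
  moreover have "T = T0 \<union> {p \<in> T. x \<in> p}" "T0 \<inter> {p \<in> T. x \<in> p} = {}" by (auto simp: T0_def)
  ultimately have cT: "card T = card T0 + 1 + card A"
    using card_Un_disjoint[of T0 "{p \<in> T. x \<in> p}"] fT by (simp add: T0_def)
  have inj2: "inj_on (\<lambda>a. {y, a}) A" using Ax by (auto simp: inj_on_def doubleton_eq_iff)
  have cB: "card B = card A" using card_image[OF inj2] by (simp add: B_def)
  have "T0 \<inter> B = (\<lambda>a. {y, a}) ` lost T x y"
    using Ax xy by (auto simp: T0_def B_def A_def lost_def)
  moreover have "lost T x y \<subseteq> A" by (auto simp: lost_def A_def)
  ultimately have cI: "card (T0 \<inter> B) = card (lost T x y)"
    using card_image[OF inj_on_subset[OF inj2]] by simp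
  have "card (T0 \<union> B) + card (T0 \<inter> B) = card T0 + card B"
    using card_Un_Int[of T0 B] fT fA by (simp add: T0_def B_def)
  moreover have "redirect T x y = T0 \<union> B" by (simp add: redirect_def T0_def B_def A_def)
  ultimately show ?thesis using cT cB cI by simp
qed

lemma cover_redirect:
  assumes ch: "cherry Y x y u" and cv: "cover Y T" and YX: "Y \<subseteq> X"
  shows "cover (Y - {x}) (redirect T x y)"
  unfolding cover_def
proof (intro conjI ballI)
  have xy: "x \<noteq> y" "y \<in> Y" using ch by (auto simp: cherry_def)
  show "redirect T x y \<subseteq> pairs (Y - {x})"
  proof
    fix p assume p: "p \<in> redirect T x y"
    show "p \<in> pairs (Y - {x})"
    proof (cases "p \<in> T \<and> x \<notin> p")
      case True
      then show ?thesis using cv by (auto simp: cover_def pairs_def)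
    next
      case False
      then obtain a where a: "p = {y, a}" "{x, a} \<in> T" "a \<noteq> y" using p by (auto simp: redirect_def)
      then show ?thesis using cover_pair_mem[OF cv a(2)] xy by (auto simp: doubleton_in_pairs_iff)
    qed
  qed
next
  fix v assume v: "v \<in> sep_vertices (Y - {x})"
  then have vM: "v \<in> sep_vertices Y" "v \<noteq> u" using sep_vertices_delete_cherry[OF ch YX] by auto
  define f where "f q = (if q = x then y else q)" for q
  have fc: "same_comp v q (f q)" for q
    using cherry_same_comp_elsewhere[OF ch YX vM] same_comp_refl by (simp add: f_def)
  obtain a b c where abc: "{a, b} \<in> T" "{a, c} \<in> T" "{b, c} \<in> T" "separated v a b c"
    using vM cv by (auto simp: cover_def)
  have s: "separated v (f a) (f b) (f c)"
    using abc(4) fc unfolding separated_def by (meson same_comp_sym same_comp_trans)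
  have image: "{f p, f q} \<in> redirect T x y" if pq: "{p, q} \<in> T" "f p \<noteq> f q" for p q
  proof (cases "p = x \<or> q = x")
    case True
    then have "{x, if p = x then q else p} \<in> T" "(if p = x then q else p) \<noteq> y"
      using pq by (auto simp: f_def insert_commute)
    then show ?thesis using True pq(2) by (auto simp: redirect_def f_def insert_commute)
  qed (use pq in \<open>auto simp: redirect_def f_def\<close>)
  have "{f a, f b} \<in> redirect T x y" "{f a, f c} \<in> redirect T x y" "{f b, f c} \<in> redirect T x y"
    using image abc separated_distinct[OF s] by auto
  then show "\<exists>a b c. {a, b} \<in> redirect T x y \<and> {a, c} \<in> redirect T x y \<and> {b, c} \<in> redirect T x y
      \<and> separated v a b c"
    using s by blast
qed

lemma multiplicity_redirect:
  assumes cv: "cover Y T" and fY: "finite Y" and w: "w \<notin> {x, y}" "w \<notin> lost T x y"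
  shows "multiplicity (redirect T x y) w = multiplicity T w"
proof -
  define S where "S = {p \<in> T. x \<notin> p \<and> w \<in> p}"
  have e1: "{p \<in> T. w \<in> p} = S \<union> (if {x, w} \<in> T then {{x, w}} else {})"
  proof
    show "{p \<in> T. w \<in> p} \<subseteq> S \<union> (if {x, w} \<in> T then {{x, w}} else {})"
    proof
      fix p assume p: "p \<in> {p \<in> T. w \<in> p}"
      obtain a b where "p = {a, b}" "a \<noteq> b" using cover_pairE[OF cv] p by blast
      then have "x \<in> p \<Longrightarrow> p = {x, w}" using p w by auto
      then show "p \<in> S \<union> (if {x, w} \<in> T then {{x, w}} else {})"
        using p by (auto simp: S_def)
    qed
  qed (auto simp: S_def)
  have e2: "{p \<in> redirect T x y. w \<in> p} = S \<union> (if {x, w} \<in> T then {{y, w}} else {})"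
    using w by (auto simp: S_def redirect_def doubleton_eq_iff)
  have "{x, w} \<notin> S" "{x, w} \<in> T \<Longrightarrow> {y, w} \<notin> S" using w by (auto simp: S_def lost_def)
  moreover have "finite S" using cover_finite[OF cv fY] by (simp add: S_def)
  ultimately show ?thesis unfolding multiplicity_def e1 e2 by (cases "{x, w} \<in> T") auto
qed

lemma leaf_triangle:
  assumes cv: "cover Y T" and fY: "finite Y" and YX: "Y \<subseteq> X" and c3: "3 \<le> card Y" and wY: "w \<in> Y"
  obtains v0 a b where "v0 \<in> sep_vertices Y" "\<forall>q\<in>Y. q \<noteq> w \<longrightarrow> \<not> same_comp v0 w q"
    "{w, a} \<in> T" "{w, b} \<in> T" "{a, b} \<in> T" "separated v0 w a b"
proof -
  obtain v0 where v0: "v0 \<in> sep_vertices Y" "\<forall>q\<in>Y. q \<noteq> w \<longrightarrow> \<not> same_comp v0 w q"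
    using leaf_isolated_somewhere[OF fY YX c3 wY] by blast
  obtain p q r where pqr: "{p, q} \<in> T" "{p, r} \<in> T" "{q, r} \<in> T" "separated v0 p q r"
    using v0(1) cv by (auto simp: cover_def)
  have inY: "p \<in> Y" "q \<in> Y" "r \<in> Y" using pqr cover_pair_mem[OF cv] by auto
  have d: "p \<noteq> q" "p \<noteq> r" "q \<noteq> r" using separated_distinct[OF pqr(4)] by auto
  have "w \<in> {p, q, r}"
  proof (rule ccontr)
    assume "w \<notin> {p, q, r}"
    then have "\<not> same_comp v0 w p" "\<not> same_comp v0 w q" "\<not> same_comp v0 w r"
      using v0(2) inY by auto
    then have "\<not> same_comp v0 p w" "\<not> same_comp v0 q w" "\<not> same_comp v0 r w"
      by (metis same_comp_sym)+
    moreover have "v0 \<in> V - X" using v0(1) by (simp add: sep_vertices_def)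
    ultimately show False
      using no_four_separated[OF _ _ _ _ _ pqr(4)] wY inY YX by blast
  qed
  then obtain a b where "a \<in> {p, q, r}" "b \<in> {p, q, r}" "w \<noteq> a" "w \<noteq> b" "a \<noteq> b"
    using d by blast
  then show ?thesis using that v0 triangle_rotate[OF pqr \<open>w \<in> {p, q, r}\<close>] by blast
qed

lemma multiplicity_ge_two:
  assumes cv: "cover Y T" and fY: "finite Y" and "Y \<subseteq> X" "3 \<le> card Y" "w \<in> Y"
  shows "2 \<le> multiplicity T w"
proof -
  obtain v0 a b where ab: "{w, a} \<in> T" "{w, b} \<in> T" "separated v0 w a b"
    using leaf_triangle[OF assms] by metis
  have "a \<noteq> b" using separated_distinct[OF ab(3)] by simp
  then have "card {{w, a}, {w, b}} = 2" by (simp add: doubleton_eq_iff)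
  moreover have "{{w, a}, {w, b}} \<subseteq> {p \<in> T. w \<in> p}" using ab by auto
  moreover have "finite {p \<in> T. w \<in> p}" using cover_finite[OF cv fY] by simp
  ultimately show ?thesis unfolding multiplicity_def by (metis card_mono)
qed

text \<open>A vertex at which \<open>w\<close> is alone cannot separate three further elements of \<open>Y\<close>: together
  with \<open>w\<close> they would lie in four different components.\<close>

lemma isolating_vertex_not_sep:
  assumes YX: "Y \<subseteq> X" and wY: "w \<in> Y" and v: "v \<in> V - X"
    and iso: "\<forall>q\<in>Y. q \<noteq> w \<longrightarrow> \<not> same_comp v w q"
  shows "v \<notin> sep_vertices (Y - {w})"
proof
  assume "v \<in> sep_vertices (Y - {w})"
  then obtain a b c where abc: "a \<in> Y - {w}" "b \<in> Y - {w}" "c \<in> Y - {w}" "separated v a b c"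
    by (auto simp: sep_vertices_def)
  then have "\<not> same_comp v w a" "\<not> same_comp v w b" "\<not> same_comp v w c"
    using iso by auto
  then have "\<not> same_comp v a w" "\<not> same_comp v b w" "\<not> same_comp v c w"
    by (metis same_comp_sym)+
  then show False using no_four_separated[OF v _ _ _ _ abc(4)] abc wY YX by blast
qed

lemma mult_two_pairs:
  assumes cv: "cover Y T" and fY: "finite Y" and YX: "Y \<subseteq> X" and c3: "3 \<le> card Y" and wY: "w \<in> Y"
    and m2: "multiplicity T w = 2"
  obtains v0 a b where "v0 \<in> V - X" "\<forall>q\<in>Y. q \<noteq> w \<longrightarrow> \<not> same_comp v0 w q"
    "{p \<in> T. w \<in> p} = {{w, a}, {w, b}}" "{a, b} \<in> T" "separated v0 w a b"
proof -
  obtain v0 a b where v0: "v0 \<in> sep_vertices Y" "\<forall>q\<in>Y. q \<noteq> w \<longrightarrow> \<not> same_comp v0 w q"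
    and ab: "{w, a} \<in> T" "{w, b} \<in> T" "{a, b} \<in> T" "separated v0 w a b"
    by (rule leaf_triangle[OF cv fY YX c3 wY])
  have sub: "{{w, a}, {w, b}} \<subseteq> {p \<in> T. w \<in> p}" using ab by auto
  have "a \<noteq> b" using separated_distinct[OF ab(4)] by simp
  then have "card {{w, a}, {w, b}} = 2" by (simp add: doubleton_eq_iff)
  then have "{p \<in> T. w \<in> p} = {{w, a}, {w, b}}"
    using card_subset_eq[OF _ sub] cover_finite[OF cv fY] m2 by (simp add: multiplicity_def)
  moreover have "v0 \<in> V - X" using v0(1) by (auto simp: sep_vertices_def)
  ultimately show ?thesis using that v0(2) ab(3,4) by blast
qed

text \<open>Deleting a leaf \<open>w\<close> of multiplicity \<open>2\<close> with all its pairs leaves a cover: a triple through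
  \<open>w\<close> can only support the vertex at which \<open>w\<close> is alone, and that vertex no longer needs support.\<close>

lemma cover_delete_mult_two:
  assumes cv: "cover Y T" and fY: "finite Y" and YX: "Y \<subseteq> X" and c3: "3 \<le> card Y" and wY: "w \<in> Y"
    and m2: "multiplicity T w = 2"
  obtains a b where "{p \<in> T. w \<in> p} = {{w, a}, {w, b}}" "{a, b} \<in> T" "w \<notin> {a, b}"
    "cover (Y - {w}) {p \<in> T. w \<notin> p}"
proof -
  obtain v0 a b where v0: "v0 \<in> V - X" "\<forall>q\<in>Y. q \<noteq> w \<longrightarrow> \<not> same_comp v0 w q"
    and eq: "{p \<in> T. w \<in> p} = {{w, a}, {w, b}}" and ab: "{a, b} \<in> T" "separated v0 w a b"
    by (rule mult_two_pairs[OF cv fY YX c3 wY m2])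
  have inV: "w \<in> V" "a \<in> V" "b \<in> V"
    using wY YX X_subset_V cover_pair_mem[OF cv ab(1)] by auto
  have "cover (Y - {w}) {p \<in> T. w \<notin> p}"
    unfolding cover_def
  proof (intro conjI ballI)
    show "{p \<in> T. w \<notin> p} \<subseteq> pairs (Y - {w})"
      using cv by (auto simp: cover_def pairs_def)
  next
    fix v assume v: "v \<in> sep_vertices (Y - {w})"
    have vY: "v \<in> sep_vertices Y" using v sep_vertices_mono[of "Y - {w}" Y] by auto
    obtain p q r where pqr: "{p, q} \<in> T" "{p, r} \<in> T" "{q, r} \<in> T" "separated v p q r"
      using vY cv by (auto simp: cover_def)
    have "w \<notin> {p, q, r}"
    proof
      assume w: "w \<in> {p, q, r}"
      obtain s t where st: "s \<in> {p, q, r}" "t \<in> {p, q, r}" "s \<noteq> t" "s \<noteq> w" "t \<noteq> w"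
        using w separated_distinct[OF pqr(4)] by (metis insert_iff)
      have tp: "{w, s} \<in> T" "{w, t} \<in> T" "separated v w s t"
        using triangle_rotate[OF pqr w st(1,2)] st by auto
      then have "{w, s} \<in> {p \<in> T. w \<in> p}" "{w, t} \<in> {p \<in> T. w \<in> p}" by auto
      then have "s \<in> {a, b}" "t \<in> {a, b}" unfolding eq using st(4,5)
        by (auto simp: doubleton_eq_iff)
      then consider "s = a" "t = b" | "s = b" "t = a" using st(3) by blast
      then have "separated v w a b"
        using tp(3) unfolding separated_def by cases (metis same_comp_sym)+
      moreover have "v \<in> V" using vY by (simp add: sep_vertices_def)
      ultimately have "v = v0"
        using separated_vertex_unique[OF _ _ inV _ ab(2)] v0(1) by blast
      then show False using isolating_vertex_not_sep[OF YX wY v0] v by blast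
    qed
    then show "\<exists>a b c. {a, b} \<in> {p \<in> T. w \<notin> p} \<and> {a, c} \<in> {p \<in> T. w \<notin> p}
        \<and> {b, c} \<in> {p \<in> T. w \<notin> p} \<and> separated v a b c"
      using pqr by auto
  qed
  moreover have "w \<notin> {a, b}" using separated_distinct[OF ab(2)] by auto
  ultimately show ?thesis using that[OF eq ab(1)] by blast
qed

lemma card_cover_lower:
  "finite Y \<Longrightarrow> Y \<subseteq> X \<Longrightarrow> 3 \<le> card Y \<Longrightarrow> cover Y T \<Longrightarrow> 2 * card Y \<le> card T + 3"
proof (induction "card Y" arbitrary: Y T rule: less_induct)
  case less
  obtain x y u where ch: "cherry Y x y u" using exists_cherry less.prems by blast
  obtain z where z: "z \<in> Y" "z \<notin> {x, y}" "{x, y} \<in> T" "{x, z} \<in> T" "{y, z} \<in> T"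
    using cherry_triangle[OF ch less.prems(4,1,3)] by blast
  have xy: "x \<noteq> y" "x \<in> Y" "y \<in> Y" using ch by (auto simp: cherry_def)
  show ?case
  proof (cases "card Y = 3")
    case True
    have "card {{x, y}, {x, z}, {y, z}} = 3" using xy z
      by (auto simp: doubleton_eq_iff card_insert_if)
    moreover have "{{x, y}, {x, z}, {y, z}} \<subseteq> T" using z by auto
    ultimately have "3 \<le> card T" using card_mono[OF cover_finite] less.prems by metis
    then show ?thesis using True by simp
  next
    case False
    then have c4: "4 \<le> card Y" and cY': "card (Y - {x}) = card Y - 1"
      using less.prems(1,3) xy by auto
    have "2 * card (Y - {x}) \<le> card (redirect T x y) + 3"
      by (rule less.hyps) (use cY' c4 less.prems cover_redirect[OF ch less.prems(4,2)] in auto)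
    moreover have "card T = card (redirect T x y) + 1 + card (lost T x y)"
      using card_redirect[OF less.prems(4,1) z(3)] .
    moreover have "1 \<le> card (lost T x y)"
    proof -
      have "lost T x y \<subseteq> Y" using cover_pair_mem[OF less.prems(4)] by (auto simp: lost_def)
      moreover have "z \<in> lost T x y" using z by (auto simp: lost_def insert_commute)
      ultimately show ?thesis using less.prems(1)
        by (metis Suc_leI card_gt_0_iff empty_iff finite_subset One_nat_def)
    qed
    ultimately show ?thesis using cY' c4 by simp
  qed
qed

lemma cover_pairs: "cover Y (pairs Y)"
  unfolding cover_def
proof (intro conjI ballI)
  fix v assume "v \<in> sep_vertices Y"
  then obtain a b c where abc: "a \<in> Y" "b \<in> Y" "c \<in> Y" "separated v a b c"
    by (auto simp: sep_vertices_def)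
  then have "{a, b} \<in> pairs Y" "{a, c} \<in> pairs Y" "{b, c} \<in> pairs Y"
    using separated_distinct by (auto simp: doubleton_in_pairs_iff)
  then show "\<exists>a b c. {a, b} \<in> pairs Y \<and> {a, c} \<in> pairs Y \<and> {b, c} \<in> pairs Y \<and> separated v a b c"
    using abc(4) by blast
qed simp

lemma cover_insert_cherry:
  assumes ch: "cherry Y x y u" and YX: "Y \<subseteq> X" and cv: "cover (Y - {x}) T"
    and yc: "{y, c} \<in> T"
  shows "cover Y (insert {x, y} (insert {x, c} T))" (is "cover Y ?T")
proof -
  have xy: "x \<noteq> y" "x \<in> Y" "y \<in> Y" using ch by (auto simp: cherry_def)
  have cY: "c \<in> Y - {x}" "c \<noteq> y" using cover_pair_mem[OF cv yc] by auto
  show ?thesis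
    unfolding cover_def
  proof (intro conjI ballI)
    have "{x, y} \<in> pairs Y" "{x, c} \<in> pairs Y" using cY xy by (auto simp: doubleton_in_pairs_iff)
    then show "?T \<subseteq> pairs Y"
      using cv pairs_mono[of "Y - {x}" Y] by (auto simp: cover_def)
  next
    fix v assume v: "v \<in> sep_vertices Y"
    show "\<exists>a b d. {a, b} \<in> ?T \<and> {a, d} \<in> ?T \<and> {b, d} \<in> ?T \<and> separated v a b d"
    proof (cases "v = u")
      case True
      have "separated u x y c" using ch cY xy unfolding cherry_def separated_def by auto
      then show ?thesis using True yc by auto
    next
      case False
      then have "v \<in> sep_vertices (Y - {x})" using v sep_vertices_delete_cherry[OF ch YX] by blast
      then obtain a b d where "{a, b} \<in> T" "{a, d} \<in> T" "{b, d} \<in> T" "separated v a b d"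
        using cv by (auto simp: cover_def)
      then show ?thesis by auto
    qed
  qed
qed

lemma exists_cover_card:
  "finite Y \<Longrightarrow> Y \<subseteq> X \<Longrightarrow> 3 \<le> card Y \<Longrightarrow> \<exists>T. cover Y T \<and> card T + 3 = 2 * card Y"
proof (induction "card Y" arbitrary: Y rule: less_induct)
  case less
  show ?case
  proof (cases "card Y = 3")
    case True
    have "card (pairs Y) = 3"
      using n_subsets[OF less.prems(1), of 2] True by (simp add: pairs_def choose_two)
    then show ?thesis using cover_pairs True by auto
  next
    case False
    obtain x y u where ch: "cherry Y x y u" using exists_cherry less.prems by blast
    have xy: "x \<noteq> y" "x \<in> Y" "y \<in> Y" using ch by (auto simp: cherry_def)
    have c4: "4 \<le> card Y" and cY': "card (Y - {x}) = card Y - 1"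
      using False less.prems(1,3) xy by auto
    have fY': "finite (Y - {x})" and YX': "Y - {x} \<subseteq> X" and c3': "3 \<le> card (Y - {x})"
      using less.prems cY' c4 by auto
    obtain T' where T': "cover (Y - {x}) T'" "card T' + 3 = 2 * card (Y - {x})"
      using less.hyps[of "Y - {x}"] cY' c4 fY' YX' c3' by auto
    obtain v0 c c' where yc: "{y, c} \<in> T'" "separated v0 y c c'"
      using leaf_triangle[OF T'(1) fY' YX' c3'] xy by (metis Diff_iff singletonD)
    have "{x, c} \<notin> T'" "{x, y} \<notin> insert {x, c} T'"
      using cover_pair_mem[OF T'(1), of x] cover_pair_mem[OF T'(1) yc(1)]
      by (auto simp: doubleton_eq_iff)
    then have "card (insert {x, y} (insert {x, c} T')) = card T' + 2"
      using cover_finite[OF T'(1) fY'] by simp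
    then show ?thesis using cover_insert_cherry[OF ch less.prems(2) T'(1) yc(1)] T'(2) cY' c4
      by auto
  qed
qed

end

section \<open>Covers with \<open>2n - 3\<close> pairs\<close>

lemma multiplicity_triangle:
  assumes "x \<noteq> y" "x \<noteq> z" "y \<noteq> z"
  shows "multiplicity {{x, y}, {x, z}, {y, z}} z = 2"
proof -
  have "{p \<in> {{x, y}, {x, z}, {y, z}}. z \<in> p} = {{x, z}, {y, z}}" using assms by auto
  moreover have "{x, z} \<noteq> {y, z}" using assms by (auto simp: doubleton_eq_iff)
  ultimately show ?thesis by (simp add: multiplicity_def)
qed

definition mult_two_avoiding :: "'a set \<Rightarrow> 'a set set \<Rightarrow> bool" where
  "mult_two_avoiding Y T \<longleftrightarrow> (\<forall>p\<in>T. \<exists>w\<in>Y. w \<notin> p \<and> multiplicity T w = 2)"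

lemma mult_two_avoiding_triangle:
  assumes "x \<noteq> y" "x \<noteq> z" "y \<noteq> z"
  shows "mult_two_avoiding {x, y, z} {{x, y}, {x, z}, {y, z}}"
proof -
  have "multiplicity {{x, y}, {x, z}, {y, z}} z = 2"
    using multiplicity_triangle[OF assms] .
  moreover have "multiplicity {{x, y}, {x, z}, {y, z}} y = 2"
    using multiplicity_triangle[of x z y] assms by (simp add: insert_commute)
  moreover have "multiplicity {{x, y}, {x, z}, {y, z}} x = 2"
    using multiplicity_triangle[of y z x] assms by (simp add: insert_commute)
  ultimately show ?thesis using assms by (auto simp: mult_two_avoiding_def)
qed

lemma card_delete_mult_two:
  assumes "finite T" "multiplicity T w = 2"
  shows "card T = card {p \<in> T. w \<notin> p} + 2"
proof -
  have "T = {p \<in> T. w \<notin> p} \<union> {p \<in> T. w \<in> p}" by auto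
  then have "card T = card {p \<in> T. w \<notin> p} + card {p \<in> T. w \<in> p}"
    using assms(1) card_Un_disjoint[of "{p \<in> T. w \<notin> p}" "{p \<in> T. w \<in> p}"] by auto
  then show ?thesis using assms(2) by (simp add: multiplicity_def)
qed

lemma mult_two_avoiding_delete:
  assumes "w \<in> Y" "multiplicity T w = 2" "{p \<in> T. w \<in> p} = {{w, a}, {w, b}}"
    and "{a, b} \<in> T" "w \<notin> {a, b}" and avoid: "mult_two_avoiding (Y - {w}) {p \<in> T. w \<notin> p}"
  shows "mult_two_avoiding Y T"
  unfolding mult_two_avoiding_def
proof
  fix p assume p: "p \<in> T"
  show "\<exists>w\<in>Y. w \<notin> p \<and> multiplicity T w = 2"
  proof (cases "w \<in> p")
    case True
    then have pw: "p \<in> {{w, a}, {w, b}}" using p unfolding assms(3)[symmetric] by simp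
    have "{a, b} \<in> {p \<in> T. w \<notin> p}" using assms(4,5) by simp
    then obtain w' where w': "w' \<in> Y - {w}" "w' \<notin> {a, b}" "multiplicity {p \<in> T. w \<notin> p} w' = 2"
      using avoid by (auto simp: mult_two_avoiding_def)
    have "w \<notin> q" if "q \<in> T" "w' \<in> q" for q
    proof
      assume "w \<in> q"
      then have "q \<in> {{w, a}, {w, b}}" using that(1) unfolding assms(3)[symmetric] by simp
      then show False using that(2) w'(1,2) by auto
    qed
    then have "{q \<in> T. w' \<in> q} = {q \<in> {p \<in> T. w \<notin> p}. w' \<in> q}" by auto
    then have "multiplicity T w' = 2" using w'(3) by (simp add: multiplicity_def)
    then show ?thesis using pw w' by auto
  next
    case False
    then show ?thesis using assms(1,2) by blast
  qed
qed

context phylo_tree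
begin

lemma tight_cover_redirect:
  assumes ch: "cherry Y x y u" and cv: "cover Y T" and fY: "finite Y" and YX: "Y \<subseteq> X"
    and c4: "4 \<le> card Y" and tight: "card T + 3 = 2 * card Y"
    and z: "z \<in> Y" "z \<notin> {x, y}" "{x, y} \<in> T" "{x, z} \<in> T" "{y, z} \<in> T"
  shows "card (redirect T x y) + 3 = 2 * card (Y - {x})" "lost T x y = {z}"
proof -
  have xY: "x \<in> Y" using ch by (simp add: cherry_def)
  have "finite (Y - {x})" "Y - {x} \<subseteq> X" "3 \<le> card (Y - {x})" using fY YX c4 xY by auto
  then have "2 * card (Y - {x}) \<le> card (redirect T x y) + 3"
    using card_cover_lower cover_redirect[OF ch cv YX] by blast
  moreover have "card T = card (redirect T x y) + 1 + card (lost T x y)"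
    using card_redirect[OF cv fY z(3)] .
  ultimately have "card (lost T x y) \<le> 1" "card (redirect T x y) + 3 \<ge> 2 * card (Y - {x})"
    using tight xY fY c4 by auto
  moreover have "z \<in> lost T x y" using z by (auto simp: lost_def insert_commute)
  moreover have "finite (lost T x y)"
    using cover_pair_mem[OF cv] fY by (auto simp: lost_def intro: finite_subset)
  ultimately show "lost T x y = {z}" using card_le_Suc0_iff_eq by fastforce
  then show "card (redirect T x y) + 3 = 2 * card (Y - {x})"
    using card_redirect[OF cv fY z(3)] tight xY fY c4 by simp
qed

text \<open>The induction proves more than the existence of an element of multiplicity \<open>2\<close>: such an
  element can be found outside any given pair, which is what the step needs after pruning.\<close>

lemma tight_cover_mult_two_avoiding:
  "finite Y \<Longrightarrow> Y \<subseteq> X \<Longrightarrow> 3 \<le> card Y \<Longrightarrow> cover Y T \<Longrightarrow> card T + 3 = 2 * card Y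
   \<Longrightarrow> mult_two_avoiding Y T"
proof (induction "card Y" arbitrary: Y T rule: less_induct)
  case less
  obtain x y u where ch: "cherry Y x y u" using exists_cherry less.prems by blast
  obtain z where z: "z \<in> Y" "z \<notin> {x, y}" "{x, y} \<in> T" "{x, z} \<in> T" "{y, z} \<in> T"
    using cherry_triangle[OF ch less.prems(4,1,3)] by blast
  have xy: "x \<noteq> y" "x \<in> Y" "y \<in> Y" using ch by (auto simp: cherry_def)
  have fT: "finite T" using cover_finite less.prems by blast
  show ?case
  proof (cases "card Y = 3")
    case True
    have d: "x \<noteq> y" "x \<noteq> z" "y \<noteq> z" using xy z by auto
    have sub: "{x, y, z} \<subseteq> Y" "{{x, y}, {x, z}, {y, z}} \<subseteq> T" using xy z by auto
    have "card {x, y, z} = 3" "card {{x, y}, {x, z}, {y, z}} = 3"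
      using d by (auto simp: doubleton_eq_iff card_insert_if)
    then have "Y = {x, y, z}" "T = {{x, y}, {x, z}, {y, z}}"
      using card_subset_eq[OF less.prems(1) sub(1)] card_subset_eq[OF fT sub(2)]
        True less.prems(5) by simp_all
    then show ?thesis using mult_two_avoiding_triangle[OF d] by simp
  next
    case False
    then have c4: "4 \<le> card Y" using less.prems(3) by simp
    have cv': "cover (Y - {x}) (redirect T x y)" using cover_redirect[OF ch less.prems(4,2)] .
    note red = tight_cover_redirect[OF ch less.prems(4,1,2) c4 less.prems(5) z]
    have "mult_two_avoiding (Y - {x}) (redirect T x y)"
      by (rule less.hyps) (use xy c4 less.prems cv' red(1) in auto)
    moreover have "{y, z} \<in> redirect T x y" using z xy by (auto simp: redirect_def)
    ultimately obtain w where w: "w \<in> Y - {x}" "w \<notin> {y, z}" "multiplicity (redirect T x y) w = 2"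
      unfolding mult_two_avoiding_def by blast
    then have wY: "w \<in> Y" and mw: "multiplicity T w = 2"
      using multiplicity_redirect[OF less.prems(4,1), of w x y] red(2) by auto
    obtain a b where ab: "{p \<in> T. w \<in> p} = {{w, a}, {w, b}}" "{a, b} \<in> T" "w \<notin> {a, b}"
      and cv1: "cover (Y - {w}) {p \<in> T. w \<notin> p}"
      using cover_delete_mult_two[OF less.prems(4,1,2,3) wY mw] by blast
    have "mult_two_avoiding (Y - {w}) {p \<in> T. w \<notin> p}"
      by (rule less.hyps)
        (use wY c4 less.prems cv1 card_delete_mult_two[OF fT mw] in auto)
    then show ?thesis using mult_two_avoiding_delete[OF wY mw ab] by blast
  qed
qed

text \<open>A triplet cover exists only if every interior vertex separates three leaves; given that,
  triplet covers are exactly the covers of \<open>X\<close>.\<close>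

lemma triplet_cover_iff_cover:
  assumes "triplet_cover X V E T0"
  shows "triplet_cover X V E T \<longleftrightarrow> cover X T"
proof -
  have interior: "V - X = sep_vertices X"
  proof
    show "V - X \<subseteq> sep_vertices X"
    proof
      fix v assume v: "v \<in> V - X"
      then obtain a b c where s: "supports V E T0 a b c v"
        using assms unfolding triplet_cover_def by blast
      then have "{a, b} \<in> pairs X" "{a, c} \<in> pairs X"
        using assms by (auto simp: supports_def triplet_cover_def)
      then have "a \<in> X" "b \<in> X" "c \<in> X" by (simp_all add: doubleton_in_pairs_iff)
      moreover have "separated v a b c" using s by (simp add: supports_def separated_def)
      ultimately show "v \<in> sep_vertices X" using v by (auto simp: sep_vertices_def)
    qed
  qed (auto simp: sep_vertices_def)
  have "supports V E T a b c v \<longleftrightarrow> {a, b} \<in> T \<and> {a, c} \<in> T \<and> {b, c} \<in> T \<and> separated v a b c"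
    if "T \<subseteq> pairs X" "v \<in> V - X" for a b c v
    using that X_subset_V doubleton_in_pairs_iff[of _ _ X]
    by (auto simp: supports_def separated_def)
  then show ?thesis by (auto simp: triplet_cover_def cover_def interior)
qed

end

theorem corollary2:
  fixes X :: "'a set" and \<T> :: "'a set set"
  assumes "finite X" and "card X \<ge> 3"
    and "\<exists>V E. binary_phylo_tree X V E \<and> min_triplet_cover X V E \<T>"
  shows "mu X \<T> = 2"
proof -
  obtain V E where "binary_phylo_tree X V E" and min: "min_triplet_cover X V E \<T>"
    using assms(3) by blast
  then interpret phylo_tree X V E by unfold_locales
  have tc: "triplet_cover X V E \<T>" using min by (simp add: min_triplet_cover_def)
  note covers = triplet_cover_iff_cover[OF tc]
  have cv: "cover X \<T>" using covers tc by blast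
  obtain T0 where T0: "cover X T0" "card T0 + 3 = 2 * card X"
    using exists_cover_card[OF assms(1) subset_refl assms(2)] by blast
  have "card \<T> \<le> card T0" using min T0(1) covers by (simp add: min_triplet_cover_def)
  moreover have "2 * card X \<le> card \<T> + 3"
    using card_cover_lower[OF assms(1) subset_refl assms(2) cv] .
  ultimately have tight: "card \<T> + 3 = 2 * card X" using T0(2) by simp
  then have avoid: "mult_two_avoiding X \<T>"
    using tight_cover_mult_two_avoiding[OF assms(1) subset_refl assms(2) cv] by blast
  obtain p where "p \<in> \<T>" using tight assms(2) by fastforce
  then obtain w where "w \<in> X" "multiplicity \<T> w = 2"
    using avoid by (auto simp: mult_two_avoiding_def)
  then show ?thesis unfolding mu_def
    using multiplicity_ge_two[OF cv assms(1) subset_refl assms(2)] assms(1)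
    by (intro Min_eqI) auto
qed

end
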